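(* Let $p,n$ be positive integers and $c=\gcd(p,n)$. Then the quandle counting matrix of $\widetilde{\mathcal{T}(p,2)}$ with respect to the dihedral quandle $\mathbb{Z}_n$ is $\Phi^{M_n}_{\mathbb{Z}_n}(\widetilde{\mathcal{T}(p,2)})=cI_n$, where $I_n$ is the $n\times n$ identity matrix.
   Context: $\mathbb{Z}_n=\{0,\dots,n-1\}$ is the dihedral quandle ($x\triangleright y=2y-x$ mod $n$). For a $1$-linkoid $L$ with fundamental pointed quandle $P(L)$ and a finite quandle $X=\{x_1,\dots,x_k\}$, the quandle counting matrix $\Phi^{M_k}_X(L)$ is the $k\times k$ matrix with $(i,j)$ entry $|\hom(P(L),(X,x_i,x_j))|$ (basepoint-preserving homomorphisms). Here $P(\widetilde{\mathcal{T}(p,2)})=(Q,x_1,x_{p+1})$ with $Q=\langle x_1,\dots,x_{p+1}\mid x_p=x_2\triangleright x_{p+1},\ x_i=x_{i+2}\triangleright x_{i+1}\ (1\le i\le p-1)\rangle$, the fundamental pointed quandle of the $1$-linkoid of $(p,2)$-torus type. *)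

theory Defs
  imports Main "HOL-Library.FuncSet" "Jordan_Normal_Form.Matrix"
begin

text \<open>Quandle words over a set of generators: Op s t denotes s \<triangleright> t.\<close>
datatype 'g qterm = Gen 'g | Op "'g qterm" "'g qterm"

fun qeval :: "('a \<Rightarrow> 'a \<Rightarrow> 'a) \<Rightarrow> ('g \<Rightarrow> 'a) \<Rightarrow> 'g qterm \<Rightarrow> 'a" where
  "qeval tr g (Gen a) = g a"
| "qeval tr g (Op s t) = tr (qeval tr g s) (qeval tr g t)"

definition dihedral_op :: "int \<Rightarrow> int \<Rightarrow> int \<Rightarrow> int" where
  "dihedral_op n x y = (2 * y - x) mod n"

definition dihedral_carrier :: "nat \<Rightarrow> int set" where
  "dihedral_carrier n = {0..<int n}"

text \<open>By the universal property of a quandle presentation, such homomorphisms correspond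
  bijectively to generator assignments G \<rightarrow> X satisfying all relations and
  sending the basepoints to y1, y2.\<close>
definition pointed_hom_count ::
  "'g set \<Rightarrow> ('g qterm \<times> 'g qterm) set \<Rightarrow> 'g \<Rightarrow> 'g \<Rightarrow>
   'a set \<Rightarrow> ('a \<Rightarrow> 'a \<Rightarrow> 'a) \<Rightarrow> 'a \<Rightarrow> 'a \<Rightarrow> nat" where
  "pointed_hom_count G R b1 b2 X tr y1 y2 =
     card {g \<in> G \<rightarrow>\<^sub>E X. (\<forall>(s, t) \<in> R. qeval tr g s = qeval tr g t) \<and> g b1 = y1 \<and> g b2 = y2}"

definition counting_matrix ::
  "'g set \<Rightarrow> ('g qterm \<times> 'g qterm) set \<Rightarrow> 'g \<Rightarrow> 'g \<Rightarrow>
   'a list \<Rightarrow> ('a \<Rightarrow> 'a \<Rightarrow> 'a) \<Rightarrow> nat mat" where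
  "counting_matrix G R b1 b2 xs tr =
     mat (length xs) (length xs)
       (\<lambda>(i, j). pointed_hom_count G R b1 b2 (set xs) tr (xs ! i) (xs ! j))"

text \<open>Presentation of the fundamental pointed quandle of the 1-linkoid of (p,2)-torus type:
  generators x_1..x_{p+1}, relations x_p = x_2 \<triangleright> x_{p+1} and
  x_i = x_{i+2} \<triangleright> x_{i+1} for 1 \<le> i \<le> p-1; basepoints x_1, x_{p+1}.\<close>
definition torus_gens :: "nat \<Rightarrow> nat set" where
  "torus_gens p = {1..p+1}"

definition torus_rels :: "nat \<Rightarrow> (nat qterm \<times> nat qterm) set" where
  "torus_rels p = insert (Gen p, Op (Gen 2) (Gen (p+1)))
      {(Gen i, Op (Gen (i+2)) (Gen (i+1))) | i. 1 \<le> i \<and> i \<le> p - 1}"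

definition torus_counting_matrix_dihedral :: "nat \<Rightarrow> nat \<Rightarrow> nat mat" where
  "torus_counting_matrix_dihedral p n =
     counting_matrix (torus_gens p) (torus_rels p) 1 (p+1)
        (map int [0..<n]) (dihedral_op (int n))"

end

theory Submission
  imports Defs "HOL-Number_Theory.Cong"
begin

(* A colouring of x_1, ..., x_{p+1} by Z_n satisfies x_i = 2 x_{i+1} - x_{i+2}, so, read from
   x_{p+1} downwards, it is an arithmetic progression mod n with some step d. The remaining
   relation x_p = 2 x_{p+1} - x_2 holds exactly when n divides p d, and then x_1 = x_{p+1} + p d
   = x_{p+1} mod n. So there are no colourings with distinct endpoints, and those with both endpoints
   equal to b correspond to the steps d < n with n dvd p d, of which there are gcd p n. *)

lemma card_lessThan_dvd_mult:
  fixes p n :: nat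
  assumes "0 < n"
  shows "card {d. d < n \<and> n dvd p * d} = gcd p n"
proof -
  define c where "c = gcd p n"
  define m where "m = n div c"
  have "0 < c"
    using assms by (simp add: c_def)
  have n_eq: "n = m * c"
    by (simp add: c_def m_def)
  have "0 < m"
    using assms by (simp add: m_def c_def div_greater_zero_iff)
  have "coprime m (p div c)"
    using div_gcd_coprime[of p n] assms by (simp add: c_def m_def coprime_commute)
  have dvd_iff: "n dvd p * d \<longleftrightarrow> m dvd d" for d
  proof -
    have "n dvd p * d \<longleftrightarrow> m * c dvd (p div c * d) * c"
      by (simp add: c_def m_def ac_simps)
    also have "\<dots> \<longleftrightarrow> m dvd d"
      using \<open>0 < c\<close> \<open>coprime m (p div c)\<close> by (simp add: coprime_dvd_mult_right_iff)
    finally show ?thesis .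
  qed
  have "d < n \<and> m dvd d \<longleftrightarrow> (\<exists>j<c. d = j * m)" for d
    unfolding n_eq using \<open>0 < m\<close> by auto
  then have "{d. d < n \<and> n dvd p * d} = (\<lambda>j. j * m) ` {..<c}"
    by (auto simp: dvd_iff)
  moreover have "inj_on (\<lambda>j. j * m) {..<c}"
    using \<open>0 < m\<close> by (auto simp: inj_on_def)
  ultimately show ?thesis
    by (simp add: card_image c_def)
qed

lemma cong_arith_progression:
  fixes h :: "nat \<Rightarrow> int"
  assumes rec: "\<And>j. j + 2 \<le> m \<Longrightarrow> [h (j + 2) = 2 * h (j + 1) - h j] (mod N)"
  shows "k \<le> m \<Longrightarrow> [h k = h 0 + int k * (h 1 - h 0)] (mod N)"
proof (induction k rule: less_induct)
  case (less k)
  consider "k = 0" | "k = 1" | j where "k = j + 2"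
    by (metis One_nat_def add_2_eq_Suc' not0_implies_Suc)
  then show ?case
  proof cases
    case 3
    have "[h k = 2 * h (j + 1) - h j] (mod N)"
      using rec less.prems 3 by simp
    also have "[2 * h (j + 1) - h j
        = 2 * (h 0 + int (j + 1) * (h 1 - h 0)) - (h 0 + int j * (h 1 - h 0))] (mod N)"
      using less 3 by (intro cong_diff cong_mult cong_refl less.IH) auto
    also have "2 * (h 0 + int (j + 1) * (h 1 - h 0)) - (h 0 + int j * (h 1 - h 0))
        = h 0 + int k * (h 1 - h 0)"
      using 3 by (simp add: algebra_simps)
    finally show ?thesis .
  qed simp_all
qed

lemma torus_rels_hold_iff:
  "(\<forall>(s, t) \<in> torus_rels p. qeval tr g s = qeval tr g t) \<longleftrightarrow>
   g p = tr (g 2) (g (p + 1)) \<and> (\<forall>i. 1 \<le> i \<and> i \<le> p - 1 \<longrightarrow> g i = tr (g (i + 2)) (g (i + 1)))"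
  by (simp add: torus_rels_def setcompr_eq_image)

lemma eq_dihedral_op_iff_cong:
  assumes "x \<in> dihedral_carrier n"
  shows "x = dihedral_op (int n) y z \<longleftrightarrow> [x = 2 * z - y] (mod int n)"
  using assms by (auto simp: dihedral_carrier_def dihedral_op_def cong_def)

definition dihedral_torus_colorings :: "nat \<Rightarrow> nat \<Rightarrow> (nat \<Rightarrow> int) set" where
  "dihedral_torus_colorings p n = {g \<in> torus_gens p \<rightarrow>\<^sub>E dihedral_carrier n.
     \<forall>(s, t) \<in> torus_rels p. qeval (dihedral_op (int n)) g s = qeval (dihedral_op (int n)) g t}"

lemma dihedral_torus_coloring_iff:
  assumes "0 < p"
  shows "g \<in> dihedral_torus_colorings p n \<longleftrightarrow> g \<in> torus_gens p \<rightarrow>\<^sub>E dihedral_carrier n \<and>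
    [g p = 2 * g (p + 1) - g 2] (mod int n) \<and>
    (\<forall>i. 1 \<le> i \<and> i \<le> p - 1 \<longrightarrow> [g i = 2 * g (i + 1) - g (i + 2)] (mod int n))"
proof -
  have "g i \<in> dihedral_carrier n" if "g \<in> torus_gens p \<rightarrow>\<^sub>E dihedral_carrier n" "1 \<le> i" "i \<le> p"
    for i
    using that by (auto simp: torus_gens_def)
  then show ?thesis
    using assms unfolding dihedral_torus_colorings_def torus_rels_hold_iff
    by (auto simp: eq_dihedral_op_iff_cong)
qed

definition progression_coloring :: "nat \<Rightarrow> nat \<Rightarrow> int \<Rightarrow> nat \<Rightarrow> nat \<Rightarrow> int" where
  "progression_coloring p n b d =
     restrict (\<lambda>i. (b + int (p + 1 - i) * int d) mod int n) (torus_gens p)"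

lemma progression_coloring_cong:
  assumes "i \<in> torus_gens p"
  shows "[progression_coloring p n b d i = b + int (p + 1 - i) * int d] (mod int n)"
  using assms by (simp add: progression_coloring_def)

lemma dihedral_torus_coloring_cong_progression:
  assumes "0 < p" "g \<in> dihedral_torus_colorings p n" "k \<le> p"
  shows "[g (p + 1 - k) = g (p + 1) + int k * (g p - g (p + 1))] (mod int n)"
proof -
  have rec: "[g i = 2 * g (i + 1) - g (i + 2)] (mod int n)" if "1 \<le> i" "i \<le> p - 1" for i
    using assms(1,2) that by (simp add: dihedral_torus_coloring_iff)
  have "[g (p + 1 - (j + 2)) = 2 * g (p + 1 - (j + 1)) - g (p + 1 - j)] (mod int n)"
    if "j + 2 \<le> p" for j
  proof -
    have "p + 1 - (j + 2) = p - 1 - j" "p - 1 - j + 1 = p + 1 - (j + 1)"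
      "p - 1 - j + 2 = p + 1 - j"
      using that by simp_all
    then show ?thesis
      using rec[of "p - 1 - j"] that by simp
  qed
  from cong_arith_progression[where h = "\<lambda>j. g (p + 1 - j)", OF this \<open>k \<le> p\<close>]
  show ?thesis
    by simp
qed

lemma dihedral_torus_coloring_step_annihilated:
  assumes "0 < p" "g \<in> dihedral_torus_colorings p n"
  shows "[int p * (g p - g (p + 1)) = 0] (mod int n)"
proof -
  define b where "b = g (p + 1)"
  define e where "e = g p - g (p + 1)"
  have "p + 1 - (p - 1) = 2"
    using \<open>0 < p\<close> by simp
  then have g2: "[g 2 = b + int (p - 1) * e] (mod int n)"
    using dihedral_torus_coloring_cong_progression[OF assms, of "p - 1"] by (simp add: b_def e_def)
  have "b + e = g p"
    by (simp add: b_def e_def)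
  also have "[g p = 2 * b - g 2] (mod int n)"
    using assms by (simp add: dihedral_torus_coloring_iff b_def)
  also have "[2 * b - g 2 = 2 * b - (b + int (p - 1) * e)] (mod int n)"
    using g2 by (intro cong_diff cong_refl)
  finally have "[b + e - (2 * b - (b + int (p - 1) * e)) = 0] (mod int n)"
    by (simp only: cong_diff_iff_cong_0)
  moreover have "b + e - (2 * b - (b + int (p - 1) * e)) = int p * e"
    using \<open>0 < p\<close> by (simp add: algebra_simps)
  ultimately show ?thesis
    by (simp add: e_def)
qed

lemma dihedral_torus_coloring_is_progression:
  assumes "0 < p" "0 < n" and g: "g \<in> dihedral_torus_colorings p n"
  obtains d where "d < n" "n dvd p * d" "g = progression_coloring p n (g (p + 1)) d"
proof -
  have g_Pi: "g \<in> torus_gens p \<rightarrow>\<^sub>E dihedral_carrier n"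
    using g by (simp add: dihedral_torus_colorings_def)
  define e where "e = g p - g (p + 1)"
  define d where "d = nat (e mod int n)"
  have d_cong: "[int d = e] (mod int n)"
    using \<open>0 < n\<close> by (simp add: d_def cong_def)
  have "d < n"
    using \<open>0 < n\<close> by (simp add: d_def nat_less_iff)
  moreover have "n dvd p * d"
  proof -
    have "[int p * int d = int p * e] (mod int n)"
      using d_cong by (simp add: cong_mult)
    also have "[int p * e = 0] (mod int n)"
      using dihedral_torus_coloring_step_annihilated[OF \<open>0 < p\<close> g] by (simp add: e_def)
    finally show ?thesis
      by (simp add: cong_0_iff flip: of_nat_mult)
  qed
  moreover have "g i = progression_coloring p n (g (p + 1)) d i" for i
  proof (cases "i \<in> torus_gens p")
    case True
    then have "p + 1 - i \<le> p" "p + 1 - (p + 1 - i) = i"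
      by (auto simp: torus_gens_def)
    then have "[g i = g (p + 1) + int (p + 1 - i) * e] (mod int n)"
      using dihedral_torus_coloring_cong_progression[OF \<open>0 < p\<close> g, of "p + 1 - i"]
      by (simp add: e_def)
    also have "[g (p + 1) + int (p + 1 - i) * e = g (p + 1) + int (p + 1 - i) * int d] (mod int n)"
      using d_cong by (intro cong_add cong_mult cong_refl) (rule cong_sym)
    finally have "g i mod int n = progression_coloring p n (g (p + 1)) d i"
      using True by (simp add: progression_coloring_def cong_def)
    moreover have "g i mod int n = g i"
      using PiE_mem[OF g_Pi True] by (simp add: dihedral_carrier_def)
    ultimately show ?thesis
      by simp
  next
    case False
    then have "progression_coloring p n (g (p + 1)) d i = undefined"
      by (simp add: progression_coloring_def)
    moreover have "g i = undefined"
      using g_Pi False by (rule PiE_arb)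
    ultimately show ?thesis
      by simp
  qed
  ultimately show ?thesis
    using that by blast
qed

lemma progression_coloring_endpoints:
  assumes "b \<in> dihedral_carrier n" "n dvd p * d"
  shows "progression_coloring p n b d 1 = b" "progression_coloring p n b d (p + 1) = b"
proof -
  have b_mod: "b mod int n = b"
    using assms(1) by (simp add: dihedral_carrier_def)
  have "[b + int p * int d = b] (mod int n)"
    using assms(2) by (simp add: cong_iff_dvd_diff flip: of_nat_mult)
  then have "(b + int (p + 1 - 1) * int d) mod int n = b"
    using b_mod by (simp add: cong_def)
  then show "progression_coloring p n b d 1 = b"
    by (simp add: progression_coloring_def torus_gens_def)
  show "progression_coloring p n b d (p + 1) = b"
    using b_mod by (simp add: progression_coloring_def torus_gens_def)
qed

lemma progression_coloring_mem:
  assumes "0 < p" "b \<in> dihedral_carrier n" "n dvd p * d"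
  shows "progression_coloring p n b d \<in> dihedral_torus_colorings p n"
proof -
  let ?f = "progression_coloring p n b d"
  define N where "N = int n"
  have f_cong: "[?f i = b + int (p + 1 - i) * int d] (mod N)" if "1 \<le> i" "i \<le> p + 1" for i
    unfolding N_def using that by (intro progression_coloring_cong) (simp add: torus_gens_def)
  have "0 < n"
    using assms(2) by (simp add: dihedral_carrier_def)
  then have "?f \<in> torus_gens p \<rightarrow>\<^sub>E dihedral_carrier n"
    by (simp add: progression_coloring_def dihedral_carrier_def)
  moreover have "[?f i = 2 * ?f (i + 1) - ?f (i + 2)] (mod N)" if "1 \<le> i" "i \<le> p - 1" for i
  proof -
    have "[?f i = b + int (p + 1 - i) * int d] (mod N)"
      using that by (intro f_cong) auto
    also have "b + int (p + 1 - i) * int d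
        = 2 * (b + int (p + 1 - (i + 1)) * int d) - (b + int (p + 1 - (i + 2)) * int d)"
      using that by (simp add: algebra_simps)
    also have "[\<dots> = 2 * ?f (i + 1) - ?f (i + 2)] (mod N)"
      using that by (intro cong_diff cong_mult cong_refl f_cong[THEN cong_sym]) auto
    finally show ?thesis .
  qed
  moreover have "[?f p = 2 * ?f (p + 1) - ?f 2] (mod N)"
  proof -
    have "[?f p = b + int d] (mod N)"
      using f_cong[of p] \<open>0 < p\<close> by simp
    also have "[b + int d = (b + int d) - int (p * d)] (mod N)"
      using assms(3) by (simp add: N_def cong_iff_dvd_diff flip: of_nat_mult)
    also have "(b + int d) - int (p * d) = 2 * b - (b + int (p - 1) * int d)"
      using \<open>0 < p\<close> by (simp add: algebra_simps)
    also have "[\<dots> = 2 * ?f (p + 1) - ?f 2] (mod N)"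
    proof -
      have "[b = ?f (p + 1)] (mod N)" "[b + int (p - 1) * int d = ?f 2] (mod N)"
        using f_cong[of "p + 1"] f_cong[of 2] \<open>0 < p\<close> by (simp_all add: cong_sym_eq)
      then show ?thesis
        by (intro cong_diff cong_mult cong_refl)
    qed
    finally show ?thesis .
  qed
  ultimately show ?thesis
    using \<open>0 < p\<close> by (simp add: dihedral_torus_coloring_iff N_def)
qed

lemma inj_on_progression_coloring:
  assumes "0 < p"
  shows "inj_on (progression_coloring p n b) {..<n}"
proof
  fix d d' assume "d \<in> {..<n}" "d' \<in> {..<n}"
    and same: "progression_coloring p n b d = progression_coloring p n b d'"
  have "p \<in> torus_gens p"
    using \<open>0 < p\<close> by (simp add: torus_gens_def)
  then have "[b + int d = b + int d'] (mod int n)"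
    using fun_cong[OF same, of p] by (simp add: progression_coloring_def cong_def)
  then have "[d = d'] (mod n)"
    by (simp only: cong_add_lcancel cong_int_iff)
  then show "d = d'"
    using \<open>d \<in> {..<n}\<close> \<open>d' \<in> {..<n}\<close> by (simp add: cong_less_modulus_unique_nat)
qed

lemma pointed_dihedral_torus_colorings:
  assumes "0 < p" "a \<in> dihedral_carrier n" "b \<in> dihedral_carrier n"
  shows "{g \<in> dihedral_torus_colorings p n. g 1 = a \<and> g (p + 1) = b} =
    (if a = b then progression_coloring p n b ` {d. d < n \<and> n dvd p * d} else {})"
proof -
  have "0 < n"
    using assms(2) by (simp add: dihedral_carrier_def)
  have colorings_are_progressions:
    "g 1 = b \<and> g \<in> progression_coloring p n b ` {d. d < n \<and> n dvd p * d}"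
    if g: "g \<in> dihedral_torus_colorings p n" "g (p + 1) = b" for g
  proof -
    obtain d where "d < n" "n dvd p * d" "g = progression_coloring p n b d"
      using dihedral_torus_coloring_is_progression[OF \<open>0 < p\<close> \<open>0 < n\<close> g(1)] g(2)
      by metis
    then show ?thesis
      using progression_coloring_endpoints(1)[OF assms(3)] by auto
  qed
  have progressions_are_colorings:
    "f \<in> dihedral_torus_colorings p n \<and> f 1 = b \<and> f (p + 1) = b"
    if "f \<in> progression_coloring p n b ` {d. d < n \<and> n dvd p * d}" for f
    using that assms(1,3) progression_coloring_mem progression_coloring_endpoints by blast
  show ?thesis
  proof (cases "a = b")
    case True
    then show ?thesis
      using colorings_are_progressions progressions_are_colorings
      by (simp only: if_True simp_thms) blast
  next
    case False
    then show ?thesis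
      using colorings_are_progressions by (simp only: if_False) blast
  qed
qed

lemma pointed_hom_count_torus_dihedral:
  assumes "0 < p" "a \<in> dihedral_carrier n" "b \<in> dihedral_carrier n"
  shows "pointed_hom_count (torus_gens p) (torus_rels p) 1 (p + 1)
      (dihedral_carrier n) (dihedral_op (int n)) a b = (if a = b then gcd p n else 0)"
proof -
  have "0 < n"
    using assms(2) by (simp add: dihedral_carrier_def)
  have "inj_on (progression_coloring p n b) {d. d < n \<and> n dvd p * d}"
    using inj_on_progression_coloring[OF \<open>0 < p\<close>] by (rule inj_on_subset) auto
  then have "card (progression_coloring p n b ` {d. d < n \<and> n dvd p * d}) = gcd p n"
    by (simp add: card_image card_lessThan_dvd_mult[OF \<open>0 < n\<close>])
  moreover have "pointed_hom_count (torus_gens p) (torus_rels p) 1 (p + 1)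
      (dihedral_carrier n) (dihedral_op (int n)) a b =
      card {g \<in> dihedral_torus_colorings p n. g 1 = a \<and> g (p + 1) = b}"
    unfolding pointed_hom_count_def dihedral_torus_colorings_def
    by (intro arg_cong[where f = card]) blast
  ultimately show ?thesis
    using pointed_dihedral_torus_colorings[OF assms] by simp
qed

lemma set_dihedral_elements: "set (map int [0..<n]) = dihedral_carrier n"
  by (simp add: dihedral_carrier_def image_int_atLeastLessThan)

theorem corollary6p7:
  fixes p n :: nat
  assumes "0 < p" and "0 < n"
  shows "torus_counting_matrix_dihedral p n = of_nat (gcd p n) \<cdot>\<^sub>m (1\<^sub>m n :: nat mat)"
proof (rule eq_matI)
  fix i j
  assume "i < dim_row (of_nat (gcd p n) \<cdot>\<^sub>m (1\<^sub>m n :: nat mat))"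
    and "j < dim_col (of_nat (gcd p n) \<cdot>\<^sub>m (1\<^sub>m n :: nat mat))"
  then have "i < n" "j < n"
    by simp_all
  then have "torus_counting_matrix_dihedral p n $$ (i, j) =
      pointed_hom_count (torus_gens p) (torus_rels p) 1 (p + 1)
        (dihedral_carrier n) (dihedral_op (int n)) (int i) (int j)"
    unfolding torus_counting_matrix_dihedral_def counting_matrix_def set_dihedral_elements by simp
  also have "\<dots> = (if i = j then gcd p n else 0)"
    using pointed_hom_count_torus_dihedral[OF \<open>0 < p\<close>, of "int i" n "int j"] \<open>i < n\<close> \<open>j < n\<close>
    by (simp add: dihedral_carrier_def)
  also have "\<dots> = (of_nat (gcd p n) \<cdot>\<^sub>m (1\<^sub>m n :: nat mat)) $$ (i, j)"
    using \<open>i < n\<close> \<open>j < n\<close> by simp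
  finally show "torus_counting_matrix_dihedral p n $$ (i, j)
      = (of_nat (gcd p n) \<cdot>\<^sub>m (1\<^sub>m n :: nat mat)) $$ (i, j)" .
qed (simp_all add: torus_counting_matrix_dihedral_def counting_matrix_def)

end
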